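(* For all $a,b,c,d\in\mathbb Z$: $a:b::_{SY}c:d$ if and only if $a:b::_m c:d$ holds in $(\mathbb Z,+,\mathbb Z)$.
   Context: $a:b::_{SY}c:d$ means: there exist $k,\ell,o,u\in\mathbb Z$ with $a=k+o$, $b=\ell+o$, $c=k+u$, $d=\ell+u$. $(\mathbb Z,+,\mathbb Z)$ is the algebra with universe $\mathbb Z$, addition, and every integer as a constant. A justification is a pair of terms $s\to t$ with the variables of $t$ among those of $s$; monolinear justifications are those where $s,t$ contain only one fixed variable $x$, occurring at most once in $s$ and at most once in $t$. $\uparrow^m(a\to b)$ is the set of monolinear justifications $s\to t$ with $a=s(\mathbf o)$, $b=t(\mathbf o)$ for some value $\mathbf o$; $\uparrow^m(a\to b:\!\cdot\,c\to d):=\uparrow^m(a\to b)\cap\uparrow^m(c\to d)$. A monolinear justification is trivial if it lies in all sets $\uparrow^m(a'\to b':\!\cdot\,c'\to d')$. $a\to b:\!\cdot_m\,c\to d$ holds iff either (i) all justifications in $\uparrow^m(a\to b)\cup\uparrow^m(c\to d)$ are trivial, or (ii) $J_d:=\uparrow^m(a\to b:\!\cdot\,c\to d)$ contains a non-trivial justification and for every $d'$, $J_d\subseteq J_{d'}$ implies $J_{d'}$ contains a non-trivial justification and $J_{d'}\subseteq J_d$ (ignoring trivial justifications). $a:b::_m c:d$ iff $a\to b:\!\cdot_m\,c\to d$, $b\to a:\!\cdot_m\,d\to c$, $c\to d:\!\cdot_m\,a\to b$, $d\to c:\!\cdot_m\,b\to a$ all hold. *)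

theory Defs
  imports Main
begin

datatype zterm = X | Cst int | Add zterm zterm

fun eval :: "zterm \<Rightarrow> int \<Rightarrow> int" where
  "eval X v = v"
| "eval (Cst k) v = k"
| "eval (Add s t) v = eval s v + eval t v"

fun nocc :: "zterm \<Rightarrow> nat" where
  "nocc X = 1"
| "nocc (Cst k) = 0"
| "nocc (Add s t) = nocc s + nocc t"

text \<open>Monolinear justification s \<rightarrow> t: x occurs at most once in s and at most once
  in t, and the variables of t are among those of s.\<close>
definition monolinear :: "zterm \<times> zterm \<Rightarrow> bool" where
  "monolinear j \<longleftrightarrow> nocc (fst j) \<le> 1 \<and> nocc (snd j) \<le> 1
      \<and> (nocc (snd j) > 0 \<longrightarrow> nocc (fst j) > 0)"

definition upm :: "int \<Rightarrow> int \<Rightarrow> (zterm \<times> zterm) set" where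
  "upm a b = {j. monolinear j \<and> (\<exists>v. eval (fst j) v = a \<and> eval (snd j) v = b)}"

definition upm2 :: "int \<Rightarrow> int \<Rightarrow> int \<Rightarrow> int \<Rightarrow> (zterm \<times> zterm) set" where
  "upm2 a b c d = upm a b \<inter> upm c d"

definition trivial_just :: "zterm \<times> zterm \<Rightarrow> bool" where
  "trivial_just j \<longleftrightarrow> monolinear j \<and> (\<forall>a' b' c' d'. j \<in> upm2 a' b' c' d')"

definition nontriv :: "(zterm \<times> zterm) set \<Rightarrow> (zterm \<times> zterm) set" where
  "nontriv J = {j \<in> J. \<not> trivial_just j}"

definition arrow_analogy :: "int \<Rightarrow> int \<Rightarrow> int \<Rightarrow> int \<Rightarrow> bool" where
  "arrow_analogy a b c d \<longleftrightarrow>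
     (\<forall>j \<in> upm a b \<union> upm c d. trivial_just j)
   \<or> (nontriv (upm2 a b c d) \<noteq> {} \<and>
      (\<forall>d'. nontriv (upm2 a b c d) \<subseteq> nontriv (upm2 a b c d') \<longrightarrow>
             nontriv (upm2 a b c d') \<noteq> {} \<and> nontriv (upm2 a b c d') \<subseteq> nontriv (upm2 a b c d)))"

definition analogy_m :: "int \<Rightarrow> int \<Rightarrow> int \<Rightarrow> int \<Rightarrow> bool" where
  "analogy_m a b c d \<longleftrightarrow> arrow_analogy a b c d \<and> arrow_analogy b a d c
      \<and> arrow_analogy c d a b \<and> arrow_analogy d c b a"

definition analogy_SY :: "int \<Rightarrow> int \<Rightarrow> int \<Rightarrow> int \<Rightarrow> bool" where
  "analogy_SY a b c d \<longleftrightarrow> (\<exists>k l v u. a = k + v \<and> b = l + v \<and> c = k + u \<and> d = l + u)"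

end

theory Submission
  imports Defs
begin

text \<open>A monolinear justification \<open>s \<rightarrow> t\<close> over \<open>(\<int>,+,\<int>)\<close> is either \<open>s \<rightarrow> q\<close> with
  \<open>q\<close> constant, or \<open>x + p \<rightarrow> x + q\<close>. A justification of the first kind transports
  \<open>a \<rightarrow> b\<close> only to targets \<open>b\<close>, one of the second kind only to pairs with the same
  difference \<open>q - p\<close>; in particular none is trivial, and \<open>x \<rightarrow> x + (b - a)\<close>
  singles out \<open>d = c + (b - a)\<close> among all candidate solutions. So \<open>a \<rightarrow> b :\<cdot>\<^sub>m c \<rightarrow> d\<close>
  holds iff \<open>b = d\<close> or \<open>a - b = c - d\<close>, and the four directions together force
  \<open>a - b = c - d\<close>, which is exactly \<open>a:b::\<^sub>S\<^sub>Y c:d\<close>.\<close>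

lemma eval_affine: "eval s v = eval s 0 + int (nocc s) * v"
  by (induction s) (auto simp: algebra_simps)

lemma monolinear_cases:
  assumes "monolinear (s, t)"
  obtains "nocc t = 0" | "nocc s = 1" "nocc t = 1"
  using assms by (fastforce simp: monolinear_def)

lemma upm_common_target_or_difference:
  assumes "(s, t) \<in> upm a b" and "(s, t) \<in> upm c d"
  shows "b = d \<or> a - b = c - d"
proof -
  obtain v w where "monolinear (s, t)"
    and "eval s v = a" "eval t v = b" "eval s w = c" "eval t w = d"
    using assms by (auto simp: upm_def)
  then show ?thesis
    by (cases rule: monolinear_cases)
       (use eval_affine[of t v] eval_affine[of t w] eval_affine[of s v] eval_affine[of s w]
         in simp_all)
qed

lemma not_trivial_just: "\<not> trivial_just j"
proof
  assume "trivial_just j"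
  then have "\<And>a b. j \<in> upm a b" by (auto simp: trivial_just_def upm2_def)
  from this[of 0 0] this[of 1 2] show False
    using upm_common_target_or_difference[of "fst j" "snd j" 0 0 1 2] by simp
qed

lemma nontriv_eq [simp]: "nontriv J = J"
  using not_trivial_just by (auto simp: nontriv_def)

lemma shift_in_upm_iff: "(X, Add X (Cst k)) \<in> upm c d \<longleftrightarrow> d = c + k"
  by (auto simp: upm_def monolinear_def)

lemma arrow_analogy_if_diff_eq:
  assumes "a - b = c - d"
  shows "arrow_analogy a b c d"
proof -
  let ?shift = "(X, Add X (Cst (b - a)))"
  have shift: "?shift \<in> upm2 a b c d"
    using assms by (simp add: upm2_def shift_in_upm_iff)
  have "upm2 a b c d' \<subseteq> upm2 a b c d" if "upm2 a b c d \<subseteq> upm2 a b c d'" for d'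
  proof -
    from that shift have "?shift \<in> upm c d'" by (auto simp: upm2_def)
    then have "d' = d" using assms by (simp add: shift_in_upm_iff)
    then show ?thesis by simp
  qed
  then show ?thesis using shift by (auto simp: arrow_analogy_def)
qed

lemma arrow_analogy_imp_target_or_difference:
  assumes "arrow_analogy a b c d"
  shows "b = d \<or> a - b = c - d"
proof -
  \<comment> \<open>the constant justification rules out alternative (i) of the definition\<close>
  have "(Cst a, Cst b) \<in> upm a b" by (simp add: upm_def monolinear_def)
  then have "upm2 a b c d \<noteq> {}"
    using assms not_trivial_just by (auto simp: arrow_analogy_def)
  then obtain s t where "(s, t) \<in> upm a b" "(s, t) \<in> upm c d" by (auto simp: upm2_def)
  then show ?thesis by (rule upm_common_target_or_difference)
qed

lemma analogy_SY_iff: "analogy_SY a b c d \<longleftrightarrow> a - b = c - d"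
proof
  assume "a - b = c - d"
  then have "a = a + 0 \<and> b = b + 0 \<and> c = a + (c - a) \<and> d = b + (c - a)" by simp
  then show "analogy_SY a b c d" unfolding analogy_SY_def by blast
qed (auto simp: analogy_SY_def)

theorem mainTheorem7:
  fixes a b c d :: int
  shows "analogy_SY a b c d \<longleftrightarrow> analogy_m a b c d"
proof
  assume "analogy_SY a b c d"
  then have "a - b = c - d" by (simp add: analogy_SY_iff)
  then show "analogy_m a b c d"
    by (auto simp: analogy_m_def intro!: arrow_analogy_if_diff_eq)
next
  assume "analogy_m a b c d"
  then have "b = d \<or> a - b = c - d" "a = c \<or> b - a = d - c"
    by (auto simp: analogy_m_def dest: arrow_analogy_imp_target_or_difference)
  then show "analogy_SY a b c d" by (auto simp: analogy_SY_iff)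
qed

end
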